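(* Consider the event-triggered closed-loop system described in the context, with the triggering condition $\Phi(t)=\varphi(\xi(t),\varepsilon(t))-k_1\phi_1(t)-k_2\phi_2(t)=0$ and with the initial values of $\phi_1,\phi_2$ satisfying: $\sum_k r_k\le\theta_2$, $\sum_k\hat r_k\le\theta_3$ for some finite $\theta_2,\theta_3>0$, $s_k\ge\bar\delta$ and $\hat s_k=\delta_k(\hat t_k)$. Then $\phi_1(t)\ge 0$ and $\phi_2(t)\ge 0$ for all $t\ge t_0$. More precisely, $\phi_2(t)\ge\bar\delta$ for $t\in[t_k,\hat t_k)$ and $\phi_2(t)=\delta_k(t)$ for $t\in[\hat t_k,t_{k+1})$.
   Context: Plant: $\dot\xi=f(\xi,d)+g(\xi)u$, $z=h(\xi,d)$, with state $\xi\in\mathbb{R}^n$, input $u\in\mathbb{R}^m$, disturbance $d(t)\in\mathbb{R}^q$, output $z\in\mathbb{R}^s$; $f,g,h$ locally Lipschitz, $f(0,0)=0$, $h(0,0)=0$. A locally Lipschitz state feedback $\gamma:\mathbb{R}^n\to\mathbb{R}^m$ is implemented in an event-triggered way: there is an increasing sequence of sampling times $t_0<t_1<\dots$ (indexed by $k\in\mathbb{K}=\{0,1,\dots,K\}$, with $t_{K+1}=\infty$ if $K$ is finite), $u(t)=\gamma(\xi(t_k))$ for $t\in[t_k,t_{k+1})$, and the sampling error is $\varepsilon(t)=\xi(t_k)-\xi(t)$ for $t\in[t_k,t_{k+1})$. Hence $\dot\xi=f(\xi,d)+g(\xi)\gamma(\xi+\varepsilon)$, and $t_{k+1}=\inf\{t>t_k:\Phi(t^-)=0\}$.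 Here $k_1,k_2>0$, $p\in[1,\infty)$, $\sigma<1$, $\lambda>0$, $c_1,c_2>0$, $V_c$ is a differentiable function, and $\varphi(r,s)=-c_1\sigma\|r\|^p+c_2\|s\|^p+\lambda\nabla V_c(r)\cdot g(r)(\gamma(r+s)-\gamma(r))$. The dynamic variables satisfy, on each $[t_k,t_{k+1})$: $\dot\phi_1=-\alpha_1(\phi_1)+k_2\phi_2-\varphi(\xi,\varepsilon)$ and $\dot\phi_2=-\alpha_2(\phi_2)+\bar\varphi(t)$, where $\alpha_1,\alpha_2$ are class-$\mathcal{K}_\infty$ functions, $\bar\varphi(t)=\alpha_2(\bar\delta)$ for $t\in[t_k,\hat t_k)$ and $\bar\varphi(t)=\dot\delta_k(t)+\alpha_2(\delta_k(t))$ for $t\in[\hat t_k,t_{k+1})$. Here $\bar\delta>0$ is a constant, $\hat t_k=t_k+\hat\tau$ for a constant $\hat\tau>0$, and each $\delta_k$ is a positive, bounded, piecewise differentiable function on $[\hat t_k,t_{k+1})$ with $\sum_k\int_{\hat t_k}^{t_{k+1}}\delta_k(\tau)\,d\tau\le\theta_1$ for some $\theta_1>0$. The variables are (re)initialized as $\phi_1(t_k)=r_k$, $\phi_1(\hat t_k)=\hat r_k$, $\phi_2(t_k)=s_k$, $\phi_2(\hat t_k)=\hat s_k$ with $r_k,\hat r_k,s_k,\hat s_k\ge 0$. *)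

theory Defs
  imports "HOL-Analysis.Analysis" "HOL-Library.Extended_Nat"
begin

definition classKinf :: "(real \<Rightarrow> real) \<Rightarrow> bool" where
  "classKinf \<alpha> \<longleftrightarrow> continuous_on {0..} \<alpha> \<and> \<alpha> 0 = 0 \<and>
     strict_mono_on {0..} \<alpha> \<and> filterlim \<alpha> at_top at_top"

definition loc_lipschitz :: "('a::metric_space \<Rightarrow> 'b::metric_space) \<Rightarrow> bool" where
  "loc_lipschitz F \<longleftrightarrow>
     (\<forall>x. \<exists>r>0. \<exists>L. \<forall>y\<in>ball x r. \<forall>z\<in>ball x r. dist (F y) (F z) \<le> L * dist y z)"

text \<open>Index set K = {0,...,K} (K = \<infinity> means the set of all naturals).\<close>
definition Kset :: "enat \<Rightarrow> nat set" where
  "Kset K = {k. enat k \<le> K}"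

definition nextT :: "enat \<Rightarrow> (nat \<Rightarrow> real) \<Rightarrow> nat \<Rightarrow> ereal" where
  "nextT K t k = (if enat (Suc k) \<le> K then ereal (t (Suc k)) else \<infinity>)"

definition Ival :: "enat \<Rightarrow> (nat \<Rightarrow> real) \<Rightarrow> nat \<Rightarrow> real set" where
  "Ival K t k = {\<tau>. t k \<le> \<tau> \<and> ereal \<tau> < nextT K t k}"

text \<open>First piece [t_k, hat t_k) (intersected with [t_k, t_(k+1))), hat t_k = t_k + hat tau.\<close>
definition Ival1 :: "enat \<Rightarrow> (nat \<Rightarrow> real) \<Rightarrow> real \<Rightarrow> nat \<Rightarrow> real set" where
  "Ival1 K t tauh k = {\<tau>. t k \<le> \<tau> \<and> \<tau> < t k + tauh \<and> ereal \<tau> < nextT K t k}"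

definition Ival2 :: "enat \<Rightarrow> (nat \<Rightarrow> real) \<Rightarrow> real \<Rightarrow> nat \<Rightarrow> real set" where
  "Ival2 K t tauh k = {\<tau>. t k + tauh \<le> \<tau> \<and> ereal \<tau> < nextT K t k}"

definition varphi ::
  "real \<Rightarrow> real \<Rightarrow> real \<Rightarrow> real \<Rightarrow> real \<Rightarrow> (real^'n \<Rightarrow> real^'n) \<Rightarrow>
   (real^'n \<Rightarrow> real^'m^'n) \<Rightarrow> (real^'n \<Rightarrow> real^'m) \<Rightarrow> real^'n \<Rightarrow> real^'n \<Rightarrow> real" where
  "varphi c1 c2 \<sigma> p lam gradVc g \<gamma> r s =
     - c1 * \<sigma> * norm r powr p + c2 * norm s powr p
     + lam * (gradVc r \<bullet> (g r *v (\<gamma> (r + s) - \<gamma> r)))"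

end

theory Submission
  imports Defs
begin

text \<open>Only the dynamics of \<open>\<phi>\<^sub>1, \<phi>\<^sub>2\<close>, their initial values and the triggering rule matter.
  On \<open>[t\<^sub>k, t\<^sub>k + \<tau>hat)\<close> we have \<open>\<phi>\<^sub>2' = \<alpha>\<^sub>2(\<delta>bar) - \<alpha>\<^sub>2(\<phi>\<^sub>2)\<close>, which is nonnegative
  whenever \<open>0 < \<phi>\<^sub>2 < \<delta>bar\<close>, so \<open>\<phi>\<^sub>2\<close> cannot cross below \<open>\<delta>bar\<close>. On \<open>[t\<^sub>k + \<tau>hat, t\<^sub>k\<^sub>+\<^sub>1)\<close>
  the error \<open>e = \<phi>\<^sub>2 - \<delta>\<^sub>k\<close> satisfies \<open>e' = \<alpha>\<^sub>2(\<delta>\<^sub>k) - \<alpha>\<^sub>2(\<phi>\<^sub>2)\<close>, whose sign opposes that of \<open>e\<close>,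
  and \<open>e = 0\<close> initially, so \<open>e\<close> stays zero. Finally, at a zero of \<open>\<phi>\<^sub>1\<close> the triggering rule
  \<open>\<Phi> < 0\<close> gives \<open>\<phi>\<^sub>1' = k\<^sub>2\<phi>\<^sub>2 - \<phi>(\<xi>, \<epsilon>) > k\<^sub>1\<phi>\<^sub>1 = 0\<close>, so \<open>\<phi>\<^sub>1\<close> cannot become negative.\<close>

lemma last_level_crossing:
  fixes f :: "real \<Rightarrow> real"
  assumes "a \<le> b" and cont: "continuous_on {a..b} f" and "c \<le> f a" and "f b < c"
  obtains s where "a \<le> s" "s < b" "f s = c" "\<And>x. s < x \<Longrightarrow> x \<le> b \<Longrightarrow> f x < c"
proof -
  define A where "A = {a..b} \<inter> f -` {c..}"
  have "closed A" unfolding A_def by (rule continuous_closed_preimage[OF cont]) auto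
  moreover have "a \<in> A" using assms by (auto simp: A_def)
  moreover have bdd: "bdd_above A" unfolding A_def by (auto intro: bdd_aboveI[of _ b])
  ultimately have "Sup A \<in> A" using closed_contains_Sup by blast
  have upper: "x \<le> Sup A" if "x \<in> A" for x using that bdd by (rule cSup_upper)
  have "Sup A < b" using \<open>Sup A \<in> A\<close> \<open>f b < c\<close> by (auto simp: A_def order.order_iff_strict)
  have below: "f x < c" if "Sup A < x" "x \<le> b" for x
    using upper[of x] that \<open>Sup A \<in> A\<close> by (force simp: A_def)
  have "\<exists>s\<ge>Sup A. s \<le> b \<and> f s = c"
    by (rule IVT2') (use \<open>Sup A \<in> A\<close> \<open>f b < c\<close> \<open>Sup A < b\<close> in
        \<open>auto simp: A_def intro: continuous_on_subset[OF cont]\<close>)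
  then obtain s where s: "Sup A \<le> s" "s \<le> b" "f s = c" by blast
  then have "s = Sup A" using upper[of s] \<open>Sup A \<in> A\<close> by (force simp: A_def)
  then show thesis using that s below \<open>Sup A \<in> A\<close> \<open>Sup A < b\<close> by (auto simp: A_def)
qed

lemma deriv_nonneg_off_finite_imp_le:
  fixes f f' :: "real \<Rightarrow> real"
  assumes "a \<le> b" and cont: "continuous_on {a..b} f" and "finite S"
    and deriv: "\<And>x. x \<in> {a<..<b} - S \<Longrightarrow> (f has_real_derivative f' x) (at x)"
    and nonneg: "\<And>x. x \<in> {a<..<b} - S \<Longrightarrow> 0 \<le> f' x"
  shows "f a \<le> f b"
proof -
  define g where "g x = (if x \<in> {a<..<b} - S then f' x else 0)" for x
  have "(g has_integral (f b - f a)) {a..b}"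
  proof (rule fundamental_theorem_of_calculus_interior_strong[OF \<open>finite S\<close> \<open>a \<le> b\<close> _ cont])
    fix x assume "x \<in> {a<..<b} - S"
    then show "(f has_vector_derivative g x) (at x)"
      using deriv[of x] by (simp add: g_def has_real_derivative_iff_has_vector_derivative)
  qed
  moreover have "\<forall>x\<in>{a..b}. 0 \<le> g x" using nonneg by (simp add: g_def)
  ultimately show ?thesis using has_integral_nonneg by force
qed

text \<open>The lower barrier \<open>g\<close> restricts the sign condition on \<open>f'\<close> to where it can be
  checked, e.g. where the argument of a class-\<open>\<K>\<^sub>\<infinity>\<close> function is nonnegative.\<close>

lemma barrier_ge:
  fixes f f' g :: "real \<Rightarrow> real"
  assumes "a \<le> b" and f_cont: "continuous_on {a..b} f" and g_cont: "continuous_on {a..b} g"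
    and "c \<le> f a" and g_below: "\<And>x. x \<in> {a..b} \<Longrightarrow> g x < c" and "finite S"
    and f_deriv: "\<And>x. x \<in> {a<..<b} - S \<Longrightarrow> (f has_real_derivative f' x) (at x within {a..b})"
    and f'_nonneg: "\<And>x. x \<in> {a<..<b} - S \<Longrightarrow> g x < f x \<Longrightarrow> f x < c \<Longrightarrow> 0 \<le> f' x"
  shows "c \<le> f b"
proof (rule ccontr)
  assume "\<not> c \<le> f b"
  then obtain s where s: "a \<le> s" "s < b" "f s = c" and below: "\<And>x. s < x \<Longrightarrow> x \<le> b \<Longrightarrow> f x < c"
    using last_level_crossing[OF \<open>a \<le> b\<close> f_cont \<open>c \<le> f a\<close>] by (metis not_le)
  have "continuous_on {a..b} (\<lambda>x. f x - g x)" using f_cont g_cont by (rule continuous_on_diff)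
  then have "continuous (at s within {a..b}) (\<lambda>x. f x - g x)"
    using s by (simp add: continuous_on_eq_continuous_within)
  moreover have "0 < f s - g s" using g_below[of s] s by simp
  ultimately obtain \<epsilon> where "\<epsilon> > 0" and close:
    "\<forall>x\<in>{a..b}. dist x s < \<epsilon> \<longrightarrow> dist (f x - g x) (f s - g s) < f s - g s"
    unfolding continuous_within_eps_delta by blast
  define b' where "b' = min b (s + \<epsilon>/2)"
  have "s < b'" "b' \<le> b" "b' < s + \<epsilon>" using s \<open>\<epsilon> > 0\<close> by (auto simp: b'_def)
  have "f s \<le> f b'"
  proof (rule deriv_nonneg_off_finite_imp_le[where f = f and f' = f' and a = s and b = b', OF _ _ \<open>finite S\<close>])
    show "s \<le> b'" using \<open>s < b'\<close> by simp
    show "continuous_on {s..b'} f"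
      using \<open>a \<le> s\<close> \<open>b' \<le> b\<close> by (auto intro: continuous_on_subset[OF f_cont])
    fix x assume x: "x \<in> {s<..<b'} - S"
    then have x': "x \<in> {a<..<b} - S" using \<open>a \<le> s\<close> \<open>b' \<le> b\<close> by auto
    then have "at x within {a..b} = at x" by (simp add: at_within_Icc_at)
    then show "(f has_real_derivative f' x) (at x)" using f_deriv[OF x'] by simp
    have "x \<in> {a..b}" "dist x s < \<epsilon>" using x' x \<open>b' < s + \<epsilon>\<close> by (auto simp: dist_real_def)
    then have "dist (f x - g x) (f s - g s) < f s - g s" using close by blast
    then have "g x < f x" by (simp add: dist_real_def)
    moreover have "f x < c" using below x \<open>b' \<le> b\<close> by simp
    ultimately show "0 \<le> f' x" by (rule f'_nonneg[OF x'])
  qed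
  then show False using below[of b'] \<open>s < b'\<close> \<open>b' \<le> b\<close> s by simp
qed

lemma deriv_pos_at_level_imp_ge:
  fixes f f' :: "real \<Rightarrow> real"
  assumes I: "is_interval I" "a \<in> I" "b \<in> I" "a \<le> b" and "c \<le> f a"
    and deriv: "\<And>x. x \<in> I \<Longrightarrow> (f has_real_derivative f' x) (at x within I)"
    and pos: "\<And>x. x \<in> I \<Longrightarrow> f x = c \<Longrightarrow> 0 < f' x"
  shows "c \<le> f b"
proof (rule ccontr)
  assume "\<not> c \<le> f b"
  have sub: "{a..b} \<subseteq> I" using mem_is_interval_1_I[OF I(1-3)] by auto
  have "continuous_on I f"
    using deriv by (metis DERIV_continuous continuous_on_eq_continuous_within)
  then have cont: "continuous_on {a..b} f" using sub by (rule continuous_on_subset)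
  obtain s where s: "a \<le> s" "s < b" "f s = c" and below: "\<And>x. s < x \<Longrightarrow> x \<le> b \<Longrightarrow> f x < c"
    using last_level_crossing[OF \<open>a \<le> b\<close> cont \<open>c \<le> f a\<close>] \<open>\<not> c \<le> f b\<close> by (metis not_le)
  then have "s \<in> I" using sub by auto
  obtain d where "d > 0" and increasing: "\<forall>h>0. s + h \<in> I \<longrightarrow> h < d \<longrightarrow> f s < f (s + h)"
    using has_real_derivative_pos_inc_right[OF deriv[OF \<open>s \<in> I\<close>] pos[OF \<open>s \<in> I\<close> \<open>f s = c\<close>]]
    by blast
  define h where "h = min (d/2) (b - s)"
  have "0 < h" "h < d" "s + h \<le> b" using \<open>d > 0\<close> \<open>s < b\<close> by (auto simp: h_def)
  moreover have "s + h \<in> I" using sub \<open>a \<le> s\<close> \<open>0 < h\<close> \<open>s + h \<le> b\<close> by auto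
  ultimately have "f s < f (s + h)" using increasing by blast
  then show False using below[of "s + h"] \<open>0 < h\<close> \<open>s + h \<le> b\<close> s by simp
qed

lemma relaxation_stays_above:
  fixes \<alpha> y :: "real \<Rightarrow> real"
  assumes \<alpha>: "strict_mono_on {0..} \<alpha>" and "0 < c"
    and I: "is_interval I" "a \<in> I" "b \<in> I" "a \<le> b" and "c \<le> y a"
    and deriv: "\<And>x. x \<in> I \<Longrightarrow> (y has_real_derivative - \<alpha> (y x) + \<alpha> c) (at x within I)"
  shows "c \<le> y b"
proof -
  have sub: "{a..b} \<subseteq> I" using mem_is_interval_1_I[OF I(1-3)] by auto
  have "continuous_on I y"
    using deriv by (metis DERIV_continuous continuous_on_eq_continuous_within)
  then have cont: "continuous_on {a..b} y" using sub by (rule continuous_on_subset)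
  show ?thesis
  proof (rule barrier_ge[where g = "\<lambda>_. 0" and S = "{}" and f' = "\<lambda>x. - \<alpha> (y x) + \<alpha> c",
        OF \<open>a \<le> b\<close> cont continuous_on_const \<open>c \<le> y a\<close> _ finite.emptyI])
    fix x assume "x \<in> {a<..<b} - {}"
    then have "x \<in> I" using sub by auto
    then show "(y has_real_derivative - \<alpha> (y x) + \<alpha> c) (at x within {a..b})"
      by (rule has_field_derivative_subset[OF deriv sub])
    assume "0 < y x" "y x < c"
    then show "0 \<le> - \<alpha> (y x) + \<alpha> c"
      using strict_mono_onD[OF \<alpha>, of "y x" c] by simp
  qed (use \<open>0 < c\<close> in simp)
qed

lemma tracking_solution_eq:
  fixes \<alpha> y \<delta> :: "real \<Rightarrow> real"
  assumes \<alpha>: "strict_mono_on {0..} \<alpha>"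
    and I: "is_interval I" "a \<in> I" "b \<in> I" "a \<le> b" and "y a = \<delta> a"
    and \<delta>_pos: "\<And>x. x \<in> I \<Longrightarrow> 0 < \<delta> x" and \<delta>_pwd: "\<delta> piecewise_differentiable_on I"
    and y_cont: "continuous_on I y" and "finite S"
    and y_deriv: "\<And>x. x \<in> I - S \<Longrightarrow>
      (y has_real_derivative - \<alpha> (y x) + vector_derivative \<delta> (at x within I) + \<alpha> (\<delta> x))
        (at x within I)"
  shows "y b = \<delta> b"
proof -
  have sub: "{a..b} \<subseteq> I" using mem_is_interval_1_I[OF I(1-3)] by auto
  obtain T where "finite T" and \<delta>_diff: "\<And>x. x \<in> I - T \<Longrightarrow> \<delta> differentiable (at x within I)"
    using \<delta>_pwd unfolding piecewise_differentiable_on_def by blast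
  have deriv: "((\<lambda>x. y x - \<delta> x) has_real_derivative \<alpha> (\<delta> x) - \<alpha> (y x)) (at x within {a..b})"
    if "x \<in> {a<..<b} - (S \<union> T)" for x
  proof -
    have "x \<in> I - S" "x \<in> I - T" using that sub by auto
    then have "(\<delta> has_real_derivative vector_derivative \<delta> (at x within I)) (at x within I)"
      using \<delta>_diff vector_derivative_works has_real_derivative_iff_has_vector_derivative by blast
    from DERIV_diff[OF y_deriv[OF \<open>x \<in> I - S\<close>] this]
    have "((\<lambda>x. y x - \<delta> x) has_real_derivative \<alpha> (\<delta> x) - \<alpha> (y x)) (at x within I)"
      by simp
    then show ?thesis using sub by (rule has_field_derivative_subset)
  qed
  have cont: "continuous_on {a..b} y" "continuous_on {a..b} \<delta>"
    using continuous_on_subset[OF y_cont sub] continuous_on_subset[OF _ sub] \<delta>_pwd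
    by (auto simp: piecewise_differentiable_on_def)
  have minus_\<delta>_neg: "- \<delta> x < 0" if "x \<in> {a..b}" for x using \<delta>_pos sub that by force
  have "finite (S \<union> T)" using \<open>finite S\<close> \<open>finite T\<close> by simp
  have "0 \<le> y b - \<delta> b"
  proof (rule barrier_ge[where f = "\<lambda>x. y x - \<delta> x" and g = "\<lambda>x. - \<delta> x"
        and f' = "\<lambda>x. \<alpha> (\<delta> x) - \<alpha> (y x)", OF \<open>a \<le> b\<close> _ _ _ minus_\<delta>_neg \<open>finite (S \<union> T)\<close> deriv])
    show "continuous_on {a..b} (\<lambda>x. y x - \<delta> x)" "continuous_on {a..b} (\<lambda>x. - \<delta> x)"
      using cont by (auto intro!: continuous_intros)
    show "0 \<le> y a - \<delta> a" using \<open>y a = \<delta> a\<close> by simp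
    fix x assume "- \<delta> x < y x - \<delta> x" "y x - \<delta> x < 0"
    then show "0 \<le> \<alpha> (\<delta> x) - \<alpha> (y x)"
      using strict_mono_onD[OF \<alpha>, of "y x" "\<delta> x"] by simp
  qed
  moreover have "0 \<le> \<delta> b - y b"
  proof (rule barrier_ge[where f = "\<lambda>x. \<delta> x - y x" and g = "\<lambda>x. - \<delta> x"
        and f' = "\<lambda>x. \<alpha> (y x) - \<alpha> (\<delta> x)", OF \<open>a \<le> b\<close> _ _ _ minus_\<delta>_neg \<open>finite (S \<union> T)\<close>])
    show "continuous_on {a..b} (\<lambda>x. \<delta> x - y x)" "continuous_on {a..b} (\<lambda>x. - \<delta> x)"
      using cont by (auto intro!: continuous_intros)
    show "0 \<le> \<delta> a - y a" using \<open>y a = \<delta> a\<close> by simp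
    fix x assume x: "x \<in> {a<..<b} - (S \<union> T)"
    show "((\<lambda>x. \<delta> x - y x) has_real_derivative \<alpha> (y x) - \<alpha> (\<delta> x)) (at x within {a..b})"
      using DERIV_minus[OF deriv[OF x]] by simp
    assume "\<delta> x - y x < 0"
    moreover have "0 < \<delta> x" using minus_\<delta>_neg x by force
    ultimately show "0 \<le> \<alpha> (y x) - \<alpha> (\<delta> x)"
      using strict_mono_onD[OF \<alpha>, of "\<delta> x" "y x"] by simp
  qed
  ultimately show ?thesis by simp
qed

lemma is_interval_Ival1: "is_interval (Ival1 K t \<tau>h k)"
  unfolding is_interval_1 Ival1_def by (auto intro: order.strict_trans1[of "ereal _" "ereal _"])

lemma is_interval_Ival2: "is_interval (Ival2 K t \<tau>h k)"
  unfolding is_interval_1 Ival2_def by (auto intro: order.strict_trans1[of "ereal _" "ereal _"])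

lemma Ival1_start: "0 < \<tau>h \<Longrightarrow> \<tau> \<in> Ival1 K t \<tau>h k \<Longrightarrow> t k \<in> Ival1 K t \<tau>h k \<and> t k \<le> \<tau>"
  unfolding Ival1_def by (auto intro: order.strict_trans1[of "ereal (t k)" "ereal \<tau>"])

lemma Ival2_start: "\<tau> \<in> Ival2 K t \<tau>h k \<Longrightarrow> t k + \<tau>h \<in> Ival2 K t \<tau>h k \<and> t k + \<tau>h \<le> \<tau>"
  unfolding Ival2_def by (auto intro: order.strict_trans1[of "ereal (t k + \<tau>h)" "ereal \<tau>"])

lemma Ival_eq_Ival1_Un_Ival2: "0 < \<tau>h \<Longrightarrow> Ival K t k = Ival1 K t \<tau>h k \<union> Ival2 K t \<tau>h k"
  unfolding Ival_def Ival1_def Ival2_def by auto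

theorem proposition1:
  fixes f :: "real^'n \<Rightarrow> real^'q \<Rightarrow> real^'n"
    and g :: "real^'n \<Rightarrow> real^'m^'n"
    and h :: "real^'n \<Rightarrow> real^'q \<Rightarrow> real^'s"
    and \<gamma> :: "real^'n \<Rightarrow> real^'m"
    and Vc :: "real^'n \<Rightarrow> real" and gradVc :: "real^'n \<Rightarrow> real^'n"
    and d :: "real \<Rightarrow> real^'q"
    and \<xi> :: "real \<Rightarrow> real^'n"
    and t :: "nat \<Rightarrow> real" and K :: enat
    and k1 k2 p \<sigma> lam c1 c2 \<delta>bar \<tau>hat \<theta>1 \<theta>2 \<theta>3 :: real
    and \<alpha>1 \<alpha>2 :: "real \<Rightarrow> real"
    and \<delta> :: "nat \<Rightarrow> real \<Rightarrow> real"
    and r rh s sh :: "nat \<Rightarrow> real"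
    and \<phi>1 \<phi>2 :: "real \<Rightarrow> real"
  assumes f_lip: "loc_lipschitz (\<lambda>(x, w). f x w)"
    and g_lip: "loc_lipschitz g"
    and h_lip: "loc_lipschitz (\<lambda>(x, w). h x w)"
    and f0: "f 0 0 = 0" and h0: "h 0 0 = 0"
    and \<gamma>_lip: "loc_lipschitz \<gamma>"
    and Vc_grad: "\<And>x. (Vc has_derivative (\<lambda>v. gradVc x \<bullet> v)) (at x)"
    and params: "k1 > 0" "k2 > 0" "p \<ge> 1" "\<sigma> < 1" "lam > 0" "c1 > 0" "c2 > 0"
    and \<delta>bar_pos: "\<delta>bar > 0" and \<tau>hat_pos: "\<tau>hat > 0"
    and \<alpha>1_K: "classKinf \<alpha>1" and \<alpha>2_K: "classKinf \<alpha>2"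
    and t_incr: "\<And>k. enat (Suc k) \<le> K \<Longrightarrow> t k < t (Suc k)"
    \<comment> \<open>closed-loop plant (Caratheodory solution) with u = gamma(xi(t_k)) on [t_k, t_(k+1))\<close>
    and plant: "\<And>k \<tau>. k \<in> Kset K \<Longrightarrow> t k \<le> \<tau> \<Longrightarrow> ereal \<tau> \<le> nextT K t k \<Longrightarrow>
       ((\<lambda>v. f (\<xi> v) (d v) + g (\<xi> v) *v \<gamma> (\<xi> (t k))) has_integral (\<xi> \<tau> - \<xi> (t k))) {t k..\<tau>}"
    \<comment> \<open>the functions delta_k\<close>
    and \<delta>_pos: "\<And>k \<tau>. k \<in> Kset K \<Longrightarrow> \<tau> \<in> Ival2 K t \<tau>hat k \<Longrightarrow> \<delta> k \<tau> > 0"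
    and \<delta>_bdd: "\<And>k. k \<in> Kset K \<Longrightarrow> bounded (\<delta> k ` Ival2 K t \<tau>hat k)"
    and \<delta>_pwd: "\<And>k. k \<in> Kset K \<Longrightarrow> \<delta> k piecewise_differentiable_on Ival2 K t \<tau>hat k"
    and \<delta>_int: "\<And>k. k \<in> Kset K \<Longrightarrow> \<delta> k integrable_on Ival2 K t \<tau>hat k"
    and \<theta>1_pos: "\<theta>1 > 0"
    and \<delta>_sum: "\<And>N. (\<Sum>k\<in>Kset K \<inter> {..N}. integral (Ival2 K t \<tau>hat k) (\<delta> k)) \<le> \<theta>1"
    \<comment> \<open>dynamics of phi_1 on both pieces of [t_k, t_(k+1))\<close>
    and \<phi>1_ode1: "\<And>k \<tau>. k \<in> Kset K \<Longrightarrow> \<tau> \<in> Ival1 K t \<tau>hat k \<Longrightarrow>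
       (\<phi>1 has_real_derivative
          (- \<alpha>1 (\<phi>1 \<tau>) + k2 * \<phi>2 \<tau> - varphi c1 c2 \<sigma> p lam gradVc g \<gamma> (\<xi> \<tau>) (\<xi> (t k) - \<xi> \<tau>)))
        (at \<tau> within Ival1 K t \<tau>hat k)"
    and \<phi>1_ode2: "\<And>k \<tau>. k \<in> Kset K \<Longrightarrow> \<tau> \<in> Ival2 K t \<tau>hat k \<Longrightarrow>
       (\<phi>1 has_real_derivative
          (- \<alpha>1 (\<phi>1 \<tau>) + k2 * \<phi>2 \<tau> - varphi c1 c2 \<sigma> p lam gradVc g \<gamma> (\<xi> \<tau>) (\<xi> (t k) - \<xi> \<tau>)))
        (at \<tau> within Ival2 K t \<tau>hat k)"
    \<comment> \<open>dynamics of phi_2: barphi = alpha_2(delta bar) on [t_k, hat t_k)\<close>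
    and \<phi>2_ode1: "\<And>k \<tau>. k \<in> Kset K \<Longrightarrow> \<tau> \<in> Ival1 K t \<tau>hat k \<Longrightarrow>
       (\<phi>2 has_real_derivative (- \<alpha>2 (\<phi>2 \<tau>) + \<alpha>2 \<delta>bar)) (at \<tau> within Ival1 K t \<tau>hat k)"
    \<comment> \<open>barphi = d/dt delta_k + alpha_2(delta_k) on [hat t_k, t_(k+1)), off finitely many points\<close>
    and \<phi>2_cont2: "\<And>k. k \<in> Kset K \<Longrightarrow> continuous_on (Ival2 K t \<tau>hat k) \<phi>2"
    and \<phi>2_ode2: "\<And>k. k \<in> Kset K \<Longrightarrow> \<exists>S. finite S \<and> (\<forall>\<tau> \<in> Ival2 K t \<tau>hat k - S.
       (\<phi>2 has_real_derivative
          (- \<alpha>2 (\<phi>2 \<tau>) + vector_derivative (\<delta> k) (at \<tau> within Ival2 K t \<tau>hat k) + \<alpha>2 (\<delta> k \<tau>)))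
        (at \<tau> within Ival2 K t \<tau>hat k))"
    \<comment> \<open>(re)initialization\<close>
    and init_t: "\<And>k. k \<in> Kset K \<Longrightarrow> \<phi>1 (t k) = r k \<and> \<phi>2 (t k) = s k"
    and init_th: "\<And>k. k \<in> Kset K \<Longrightarrow> t k + \<tau>hat \<in> Ival2 K t \<tau>hat k \<Longrightarrow>
       \<phi>1 (t k + \<tau>hat) = rh k \<and> \<phi>2 (t k + \<tau>hat) = sh k"
    and init_nonneg: "\<And>k. k \<in> Kset K \<Longrightarrow> r k \<ge> 0 \<and> rh k \<ge> 0 \<and> s k \<ge> 0 \<and> sh k \<ge> 0"
    and \<theta>23_pos: "\<theta>2 > 0" "\<theta>3 > 0"
    and r_sum: "\<And>N. (\<Sum>k\<in>Kset K \<inter> {..N}. r k) \<le> \<theta>2"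
    and rh_sum: "\<And>N. (\<Sum>k\<in>Kset K \<inter> {..N}. rh k) \<le> \<theta>3"
    and s_ge: "\<And>k. k \<in> Kset K \<Longrightarrow> s k \<ge> \<delta>bar"
    and sh_eq: "\<And>k. k \<in> Kset K \<Longrightarrow> sh k = \<delta> k (t k + \<tau>hat)"
    \<comment> \<open>triggering rule: Phi < 0 between consecutive sampling times\<close>
    and trigger: "\<And>k \<tau>. k \<in> Kset K \<Longrightarrow> \<tau> \<in> Ival K t k \<Longrightarrow>
       varphi c1 c2 \<sigma> p lam gradVc g \<gamma> (\<xi> \<tau>) (\<xi> (t k) - \<xi> \<tau>) - k1 * \<phi>1 \<tau> - k2 * \<phi>2 \<tau> < 0"
  shows "(\<forall>k\<in>Kset K. \<forall>\<tau>\<in>Ival K t k. \<phi>1 \<tau> \<ge> 0 \<and> \<phi>2 \<tau> \<ge> 0)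
       \<and> (\<forall>k\<in>Kset K. \<forall>\<tau>\<in>Ival1 K t \<tau>hat k. \<phi>2 \<tau> \<ge> \<delta>bar)
       \<and> (\<forall>k\<in>Kset K. \<forall>\<tau>\<in>Ival2 K t \<tau>hat k. \<phi>2 \<tau> = \<delta> k \<tau>)"
proof -
  have \<alpha>1_0: "\<alpha>1 0 = 0" and \<alpha>2_mono: "strict_mono_on {0..} \<alpha>2"
    using \<alpha>1_K \<alpha>2_K by (auto simp: classKinf_def)
  have pieces: "Ival K t k = Ival1 K t \<tau>hat k \<union> Ival2 K t \<tau>hat k" for k
    using Ival_eq_Ival1_Un_Ival2[OF \<tau>hat_pos] .
  have \<phi>2_Ival1: "\<delta>bar \<le> \<phi>2 \<tau>" if k: "k \<in> Kset K" and \<tau>: "\<tau> \<in> Ival1 K t \<tau>hat k" for k \<tau>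
  proof -
    have "t k \<in> Ival1 K t \<tau>hat k" "t k \<le> \<tau>" using Ival1_start[OF \<tau>hat_pos \<tau>] by auto
    moreover have "\<delta>bar \<le> \<phi>2 (t k)" using init_t[OF k] s_ge[OF k] by simp
    ultimately show ?thesis
      by (rule relaxation_stays_above[OF \<alpha>2_mono \<delta>bar_pos is_interval_Ival1 _ \<tau> _ _ \<phi>2_ode1[OF k]])
  qed
  have \<phi>2_Ival2: "\<phi>2 \<tau> = \<delta> k \<tau>" if k: "k \<in> Kset K" and \<tau>: "\<tau> \<in> Ival2 K t \<tau>hat k" for k \<tau>
  proof -
    obtain S where "finite S" and deriv: "\<And>x. x \<in> Ival2 K t \<tau>hat k - S \<Longrightarrow>
      (\<phi>2 has_real_derivative
        - \<alpha>2 (\<phi>2 x) + vector_derivative (\<delta> k) (at x within Ival2 K t \<tau>hat k) + \<alpha>2 (\<delta> k x))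
      (at x within Ival2 K t \<tau>hat k)"
      using \<phi>2_ode2[OF k] by metis
    have start: "t k + \<tau>hat \<in> Ival2 K t \<tau>hat k" "t k + \<tau>hat \<le> \<tau>" using Ival2_start[OF \<tau>] by auto
    moreover have "\<phi>2 (t k + \<tau>hat) = \<delta> k (t k + \<tau>hat)" using init_th[OF k start(1)] sh_eq[OF k] by simp
    ultimately show ?thesis
      by (rule tracking_solution_eq[OF \<alpha>2_mono is_interval_Ival2 _ \<tau> _ _ \<delta>_pos[OF k] \<delta>_pwd[OF k]
            \<phi>2_cont2[OF k] \<open>finite S\<close> deriv])
  qed
  have \<phi>1_nonneg: "0 \<le> \<phi>1 \<tau>" if k: "k \<in> Kset K" and \<tau>: "\<tau> \<in> Ival K t k" for k \<tau>
  proof -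
    have pos: "0 < - \<alpha>1 (\<phi>1 x) + k2 * \<phi>2 x - varphi c1 c2 \<sigma> p lam gradVc g \<gamma> (\<xi> x) (\<xi> (t k) - \<xi> x)"
      if "x \<in> Ival1 K t \<tau>hat k \<union> Ival2 K t \<tau>hat k" "\<phi>1 x = 0" for x
    proof -
      have "x \<in> Ival K t k" using that(1) pieces by blast
      from trigger[OF k this] show ?thesis using that(2) \<alpha>1_0 by simp
    qed
    consider "\<tau> \<in> Ival1 K t \<tau>hat k" | "\<tau> \<in> Ival2 K t \<tau>hat k" using \<tau> pieces by blast
    then show ?thesis
    proof cases
      case 1
      have "t k \<in> Ival1 K t \<tau>hat k" "t k \<le> \<tau>" using Ival1_start[OF \<tau>hat_pos 1] by auto
      moreover have "0 \<le> \<phi>1 (t k)" using init_t[OF k] init_nonneg[OF k] by simp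
      ultimately show ?thesis
        by (rule deriv_pos_at_level_imp_ge[OF is_interval_Ival1 _ 1 _ _ \<phi>1_ode1[OF k] pos]) auto
    next
      case 2
      have start: "t k + \<tau>hat \<in> Ival2 K t \<tau>hat k" "t k + \<tau>hat \<le> \<tau>" using Ival2_start[OF 2] by auto
      moreover have "0 \<le> \<phi>1 (t k + \<tau>hat)" using init_th[OF k start(1)] init_nonneg[OF k] by simp
      ultimately show ?thesis
        by (rule deriv_pos_at_level_imp_ge[OF is_interval_Ival2 _ 2 _ _ \<phi>1_ode2[OF k] pos]) auto
    qed
  qed
  have \<phi>2_nonneg: "0 \<le> \<phi>2 \<tau>" if k: "k \<in> Kset K" and \<tau>: "\<tau> \<in> Ival K t k" for k \<tau>
  proof -
    consider "\<tau> \<in> Ival1 K t \<tau>hat k" | "\<tau> \<in> Ival2 K t \<tau>hat k" using \<tau> pieces by blast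
    then show ?thesis
      using \<phi>2_Ival1[OF k] \<phi>2_Ival2[OF k] \<delta>_pos[OF k] \<delta>bar_pos by cases force+
  qed
  show ?thesis using \<phi>1_nonneg \<phi>2_nonneg \<phi>2_Ival1 \<phi>2_Ival2 by blast
qed

end
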